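(* Let $P_A$ and $P_B$ be convex $M$-polyforms and let $T$ be a DC-tiling of $P_B$ by $P_A$ with tiles $P_1,\dots,P_k$. Put $\Gamma_B=\mathbb{Z}^2\cap P_B$, $\Gamma_i=\mathbb{Z}^2\cap P_i$ and $\partial^T\Gamma_B=\Gamma_B\setminus\bigcup_i\Gamma_i$. Then removing the vertices of $\partial^T\Gamma_B$ splits $\Gamma_B$ into the mutually disconnected parts $\Gamma_1,\dots,\Gamma_k$: for $i\neq j$, no vertex of $\Gamma_i$ is adjacent (in $\mathbb{Z}^2$) to a vertex of $\Gamma_j$.
   Context: Let $M$ be the tiling of $\mathbb{R}^2$ in which each closed unit square $[a,a+1]\times[b,b+1]$, $a,b\in\mathbb{Z}$, is cut by its two diagonals into four isosceles triangles (base $1$, height $\tfrac12$, apex at the square's center). An $M$-polyform is a finite connected set of triangles of $M$, identified with the open interior of their union; it is convex if this open set is convex. Automorphisms of $M$ are the maps $x\mapsto Ax+t$ with $A$ a $2\times2$ signed permutation matrix and $t\in\mathbb{Z}^2$. $P^{DC}$ denotes $P$ with a direction and a color assigned to each of its sides, distinct sides receiving distinct colors. A DC-tiling of $P_B$ by $P_A$ is a tiling of $P_B$ by finitely many images of $P_A^{DC}$ under automorphisms of $M$ (open tiles, pairwise disjoint, closures covering the closure of $P_B$, carrying the transported directions and colors) such that every common edge of two adjacent tiles has the same color and direction in both tiles. *)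

theory Defs
  imports "HOL-Analysis.Analysis"
begin

definition pt :: "real \<Rightarrow> real \<Rightarrow> real^2" where
  "pt x y = vector [x, y]"

text \<open>The closed triangle of the tiling M in the unit square [a,a+1]x[b,b+1]:
  d = 0 bottom, 1 right, 2 top, 3 left; apex at the centre of the square.\<close>
definition M_triangle :: "int \<Rightarrow> int \<Rightarrow> nat \<Rightarrow> (real^2) set" where
  "M_triangle a b d =
     (let c = pt (real_of_int a + 1/2) (real_of_int b + 1/2);
          p00 = pt (real_of_int a) (real_of_int b);
          p10 = pt (real_of_int a + 1) (real_of_int b);
          p11 = pt (real_of_int a + 1) (real_of_int b + 1);
          p01 = pt (real_of_int a) (real_of_int b + 1)
      in convex hull (if d = 0 then {p00, p10, c}
                      else if d = 1 then {p10, p11, c}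
                      else if d = 2 then {p11, p01, c}
                      else {p01, p00, c}))"

definition M_triangles :: "(real^2) set set" where
  "M_triangles = {M_triangle a b d | a b d. d < 4}"

definition M_polyform :: "(real^2) set \<Rightarrow> bool" where
  "M_polyform P \<longleftrightarrow> (\<exists>F. finite F \<and> F \<noteq> {} \<and> F \<subseteq> M_triangles \<and>
       connected (interior (\<Union>F)) \<and> P = interior (\<Union>F))"

definition convex_M_polyform :: "(real^2) set \<Rightarrow> bool" where
  "convex_M_polyform P \<longleftrightarrow> M_polyform P \<and> convex P"

definition lattice_point :: "real^2 \<Rightarrow> bool" where
  "lattice_point x \<longleftrightarrow> (\<forall>i. x $ i \<in> \<int>)"

definition signed_perm_matrix :: "real^2^2 \<Rightarrow> bool" where
  "signed_perm_matrix A \<longleftrightarrow>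
     (\<exists>p s. p permutes (UNIV :: 2 set) \<and> (\<forall>i. s i = 1 \<or> s i = -1) \<and>
            (\<forall>i j. A $ i $ j = (if j = p i then s i else 0)))"

definition M_automorphism :: "(real^2 \<Rightarrow> real^2) \<Rightarrow> bool" where
  "M_automorphism f \<longleftrightarrow>
     (\<exists>A t. signed_perm_matrix A \<and> lattice_point t \<and> f = (\<lambda>x. A *v x + t))"

definition polygon_sides :: "(real^2) set \<Rightarrow> (real^2) set set" where
  "polygon_sides P = {S. S face_of closure P \<and> aff_dim S = 1}"

definition DC_data :: "(real^2) set \<Rightarrow> ((real^2) set \<Rightarrow> (real^2) \<times> (real^2))
                          \<Rightarrow> ((real^2) set \<Rightarrow> 'c) \<Rightarrow> bool" where
  "DC_data P dirn col \<longleftrightarrow>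
     (\<forall>s\<in>polygon_sides P. s = closed_segment (fst (dirn s)) (snd (dirn s))) \<and>
     inj_on col (polygon_sides P)"

definition DC_tiling :: "(real^2) set \<Rightarrow> ((real^2) set \<Rightarrow> (real^2) \<times> (real^2))
     \<Rightarrow> ((real^2) set \<Rightarrow> 'c) \<Rightarrow> (real^2) set \<Rightarrow> nat \<Rightarrow> (nat \<Rightarrow> real^2 \<Rightarrow> real^2) \<Rightarrow> bool" where
  "DC_tiling PA dirn col PB k g \<longleftrightarrow>
     DC_data PA dirn col \<and>
     (\<forall>i<k. M_automorphism (g i)) \<and>
     (\<forall>i<k. \<forall>j<k. i \<noteq> j \<longrightarrow> g i ` PA \<inter> g j ` PA = {}) \<and>
     (\<Union>i<k. closure (g i ` PA)) = closure PB \<and>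
     (\<forall>i<k. \<forall>j<k. i \<noteq> j \<longrightarrow>
        (\<forall>s\<in>polygon_sides PA. \<forall>s'\<in>polygon_sides PA.
           aff_dim (g i ` s \<inter> g j ` s') = 1 \<longrightarrow>
             col s = col s' \<and>
             (\<exists>c>0. g i (snd (dirn s)) - g i (fst (dirn s)) =
                    c *\<^sub>R (g j (snd (dirn s')) - g j (fst (dirn s'))))))"

definition lattice_pts :: "(real^2) set \<Rightarrow> (real^2) set" where
  "lattice_pts S = {x \<in> S. lattice_point x}"

end

(*
  Let P be an M-polyform and x a lattice point of P. Since P is open, it contains a point
  of each of the eight open M-triangles with vertex x, and a closed M-triangle meeting an
  open one is that triangle; hence P contains all eight. Automorphisms of M preserve the
  lattice and permute these triangles, so the same holds for every tile. If lattice points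
  x, y with |x - y| = 1 lay in different tiles, both tiles would contain the open M-triangle
  with base [x, y], contradicting disjointness. The tiles lie in P_B because they are open,
  their closures lie in the closure of P_B, and P_B is open and convex.
*)
theory Submission
  imports Defs
begin

(* M_triangle a b d is the set of points of the square [a,a+1]x[b,b+1] that are nearest to
   its side d (0 bottom, 1 right, 2 top, 3 left); side_distance measures that distance. *)
definition side_distance :: "int \<Rightarrow> int \<Rightarrow> nat \<Rightarrow> real^2 \<Rightarrow> real" where
  "side_distance a b d q =
     (if d = 0 then q$2 - b else if d = 1 then a + 1 - q$1
      else if d = 2 then b + 1 - q$2 else q$1 - a)"

definition M_open_triangle :: "int \<Rightarrow> int \<Rightarrow> nat \<Rightarrow> (real^2) set" where
  "M_open_triangle a b d =
     {q. 0 < side_distance a b d q \<and>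
         (\<forall>d'<4. d' \<noteq> d \<longrightarrow> side_distance a b d q < side_distance a b d' q)}"

lemma all_less_4: "(\<forall>d::nat<4. P d) \<longleftrightarrow> P 0 \<and> P 1 \<and> P 2 \<and> P 3"
  by (auto simp: less_Suc_eq numeral_eq_Suc)

lemma continuous_on_side_distance: "continuous_on S (side_distance a b d)"
  by (cases "d = 0"; cases "d = 1"; cases "d = 2")
     (simp_all add: side_distance_def continuous_intros)

lemma open_M_open_triangle: "open (M_open_triangle a b d)"
  unfolding M_open_triangle_def all_less_4
  by (intro open_Collect_conj open_Collect_imp open_Collect_less continuous_on_side_distance
      continuous_on_const) auto

lemma pt_eta: "pt (q$1) (q$2) = q"
  by (simp add: vec_eq_iff forall_2 pt_def)

lemma pt_mem_convex_hull_3: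
  "pt x y \<in> convex hull {pt x1 y1, pt x2 y2, pt x3 y3} \<longleftrightarrow>
   (\<exists>u v. 0 \<le> u \<and> 0 \<le> v \<and> u + v \<le> 1 \<and>
      x = x1 + u * (x2 - x1) + v * (x3 - x1) \<and> y = y1 + u * (y2 - y1) + v * (y3 - y1))"
  unfolding convex_hull_3_alt by (auto simp: pt_def vec_eq_iff forall_2)

lemma pt_in_convex_hull_3I:
  assumes "0 \<le> u" "0 \<le> v" "u + v \<le> 1"
    and "x = x1 + u * (x2 - x1) + v * (x3 - x1)" "y = y1 + u * (y2 - y1) + v * (y3 - y1)"
  shows "pt x y \<in> convex hull {pt x1 y1, pt x2 y2, pt x3 y3}"
  using assms pt_mem_convex_hull_3 by blast

lemma M_triangle_cases:
  "M_triangle a b d = convex hull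
     (if d = 0 then {pt a b, pt (a+1) b, pt (a+1/2) (b+1/2)}
      else if d = 1 then {pt (a+1) b, pt (a+1) (b+1), pt (a+1/2) (b+1/2)}
      else if d = 2 then {pt (a+1) (b+1), pt a (b+1), pt (a+1/2) (b+1/2)}
      else {pt a (b+1), pt a b, pt (a+1/2) (b+1/2)})"
  unfolding M_triangle_def Let_def by simp

lemma M_triangle_nearest_side:
  assumes "q \<in> M_triangle a b d" "d' < 4"
  shows "0 \<le> side_distance a b d q \<and> side_distance a b d q \<le> side_distance a b d' q"
proof -
  have "pt (q$1) (q$2) \<in> M_triangle a b d"
    using assms(1) by (simp add: pt_eta)
  then have "\<forall>d'<4. 0 \<le> side_distance a b d q \<and>
      side_distance a b d q \<le> side_distance a b d' q"
    unfolding M_triangle_cases all_less_4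
    by (cases "d = 0"; cases "d = 1"; cases "d = 2")
       (auto simp: pt_mem_convex_hull_3 side_distance_def)
  then show ?thesis
    using assms(2) by blast
qed

lemma M_open_triangle_subset: "M_open_triangle a b d \<subseteq> M_triangle a b d"
proof
  fix q assume q: "q \<in> M_open_triangle a b d"
  define X Y where "X = q$1 - a" and "Y = q$2 - b"
  have q_eq: "q = pt (a + X) (b + Y)"
    by (simp add: X_def Y_def pt_eta)
  have "0 < side_distance a b d q"
    and less: "\<And>d'. d' < 4 \<Longrightarrow> d' \<noteq> d \<Longrightarrow> side_distance a b d q < side_distance a b d' q"
    using q unfolding M_open_triangle_def by auto
  then consider "d = 0" "0 < Y" "Y < X" "Y < 1 - X"
    | "d = 1" "0 < 1 - X" "1 - X < Y" "1 - X < 1 - Y"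
    | "d = 2" "0 < 1 - Y" "1 - Y < X" "1 - Y < 1 - X"
    | "d = 3" "0 < X" "X < Y" "X < 1 - Y"
    using less[of 0] less[of 1] less[of 2] less[of 3]
    by (cases "d = 0"; cases "d = 1"; cases "d = 2"; cases "d = 3")
       (auto simp: side_distance_def X_def Y_def)
  then show "q \<in> M_triangle a b d"
  proof cases
    case 1
    then show ?thesis
      by (simp add: q_eq M_triangle_cases)
         (rule pt_in_convex_hull_3I[where u = "X - Y" and v = "2 * Y"];
          simp add: field_simps)
  next
    case 2
    then show ?thesis
      by (simp add: q_eq M_triangle_cases)
         (rule pt_in_convex_hull_3I[where u = "Y - (1 - X)" and v = "2 * (1 - X)"];
          simp add: field_simps)
  next
    case 3
    then show ?thesis
      by (simp add: q_eq M_triangle_cases)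
         (rule pt_in_convex_hull_3I[where u = "Y - X" and v = "2 * (1 - Y)"];
          simp add: field_simps)
  next
    case 4
    then show ?thesis
      by (simp add: q_eq M_triangle_cases)
         (rule pt_in_convex_hull_3I[where u = "1 - Y - X" and v = "2 * X"];
          simp add: field_simps)
  qed
qed

lemma M_triangle_unique_on_open_triangle:
  assumes "q \<in> M_open_triangle a b d" "q \<in> M_triangle a' b' d'" "d < 4" "d' < 4"
  shows "a' = a \<and> b' = b \<and> d' = d"
proof -
  have less: "side_distance a b d q < side_distance a b d'' q" if "d'' < 4" "d'' \<noteq> d" for d''
    using assms(1) that unfolding M_open_triangle_def by auto
  have pos: "0 < side_distance a b d q"
    using assms(1) unfolding M_open_triangle_def by auto
  have nearest: "0 \<le> side_distance a' b' d' q \<and>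
      side_distance a' b' d' q \<le> side_distance a' b' d'' q" if "d'' < 4" for d''
    using M_triangle_nearest_side[OF assms(2) that] .
  have "a < q$1" "q$1 < a + 1" "b < q$2" "q$2 < b + 1"
    using pos less[of 0] less[of 1] less[of 2] less[of 3] assms(3)
    by (cases "d = 0"; cases "d = 1"; cases "d = 2"; simp add: side_distance_def)+
  moreover have "a' \<le> q$1" "q$1 \<le> a' + 1" "b' \<le> q$2" "q$2 \<le> b' + 1"
    using nearest[of 0] nearest[of 1] nearest[of 2] nearest[of 3]
    by (auto simp: side_distance_def)
  ultimately have "a' = a" "b' = b"
    by linarith+
  moreover have "d' = d"
  proof (rule ccontr)
    assume "d' \<noteq> d"
    then show False
      using less[OF assms(4)] nearest[OF assms(3)] \<open>a' = a\<close> \<open>b' = b\<close>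
      by fastforce
  qed
  ultimately show ?thesis
    by simp
qed

(* For a lattice point x, the points x + w with w a vertex offset are interior points of the
   eight M-triangles with vertex x. *)
definition vertex_offsets :: "(real^2) set" where
  "vertex_offsets = {w. range (\<lambda>i. \<bar>w$i\<bar>) = {1/2, 1/4}}"

lemma mem_vertex_offsets_iff:
  "w \<in> vertex_offsets \<longleftrightarrow>
     (\<bar>w$1\<bar> = 1/2 \<and> \<bar>w$2\<bar> = 1/4) \<or> (\<bar>w$1\<bar> = 1/4 \<and> \<bar>w$2\<bar> = 1/2)"
  unfolding vertex_offsets_def UNIV_2 by (auto simp: doubleton_eq_iff)

lemma segment_in_M_open_triangle:
  assumes "lattice_point x" "w \<in> vertex_offsets"
  obtains a b d
  where "d < 4" "\<And>e. 0 < e \<Longrightarrow> e \<le> 1 \<Longrightarrow> x + e *\<^sub>R w \<in> M_open_triangle a b d"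
proof -
  obtain m n where x: "x$1 = of_int m" "x$2 = of_int n"
    using assms(1) unfolding lattice_point_def by (meson Ints_cases)
  define s t where "s = w$1" and "t = w$2"
  have w: "w = pt s t"
    by (simp add: s_def t_def pt_eta)
  have st: "(s = 1/2 \<or> s = -1/2) \<and> (t = 1/4 \<or> t = -1/4) \<or>
            (s = 1/4 \<or> s = -1/4) \<and> (t = 1/2 \<or> t = -1/2)"
    using assms(2) unfolding mem_vertex_offsets_iff s_def t_def by linarith
  let ?a = "if 0 < s then m else m - 1" and ?b = "if 0 < t then n else n - 1"
    and ?d = "if \<bar>s\<bar> = 1/2 then if 0 < t then 0 else 2 else if 0 < s then 3 else 1 :: nat"
  have "?d < 4"
    by simp
  moreover have "x + e *\<^sub>R w \<in> M_open_triangle ?a ?b ?d" if "0 < e" "e \<le> 1" for e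
    using st that unfolding w M_open_triangle_def all_less_4
    by (elim disjE conjE; hypsubst) (simp_all add: side_distance_def x pt_def)
  ultimately show ?thesis
    using that by blast
qed

lemma norm_le_1_if_vertex_offset: "w \<in> vertex_offsets \<Longrightarrow> norm w \<le> 1"
  using norm_le_l1_cart[of w] unfolding mem_vertex_offsets_iff by (auto simp: sum_2)

lemma M_polyform_vertex_offset:
  assumes "M_polyform P" "x \<in> P" "lattice_point x" "w \<in> vertex_offsets"
  shows "x + w \<in> P"
proof -
  obtain F where F: "F \<subseteq> M_triangles" "P = interior (\<Union>F)"
    using assms(1) unfolding M_polyform_def by blast
  have "x \<in> interior (\<Union>F)"
    using assms(2) F(2) by simp
  then obtain r where r: "r > 0" "ball x r \<subseteq> \<Union>F"
    unfolding mem_interior by blast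
  obtain a b d where d: "d < 4"
    and segment: "\<And>e. 0 < e \<Longrightarrow> e \<le> 1 \<Longrightarrow> x + e *\<^sub>R w \<in> M_open_triangle a b d"
    using segment_in_M_open_triangle[OF assms(3,4)] by metis
  define e where "e = min 1 (r/2)"
  have e: "0 < e" "e \<le> 1" "e < r"
    using r(1) unfolding e_def by auto
  have "norm (e *\<^sub>R w) \<le> e"
    using e norm_le_1_if_vertex_offset[OF assms(4)] by (simp add: mult_left_le)
  then have "x + e *\<^sub>R w \<in> ball x r"
    using e(3) by (simp add: dist_norm)
  then obtain T where T: "T \<in> F" "x + e *\<^sub>R w \<in> T"
    using r(2) by blast
  then obtain a' b' d' where T_eq: "T = M_triangle a' b' d'" and "d' < 4"
    using F(1) unfolding M_triangles_def by blast
  then have "a' = a \<and> b' = b \<and> d' = d"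
    using M_triangle_unique_on_open_triangle[OF segment[OF e(1,2)] _ d] T(2) by simp
  then have "M_triangle a b d \<in> F"
    using T(1) T_eq by simp
  then have "M_open_triangle a b d \<subseteq> \<Union>F"
    using M_open_triangle_subset by blast
  then have "M_open_triangle a b d \<subseteq> P"
    unfolding F(2) using open_M_open_triangle by (rule interior_maximal)
  then show ?thesis
    using segment[of 1] by auto
qed

lemma open_M_polyform: "M_polyform P \<Longrightarrow> open P"
  unfolding M_polyform_def by auto

lemma signed_perm_matrix_mult_vec:
  assumes "signed_perm_matrix A"
  obtains p s where "p permutes UNIV" "\<And>i. s i = 1 \<or> s i = -1"
    "\<And>x i. (A *v x) $ i = s i * x $ p i"
proof -
  obtain p s where ps: "p permutes UNIV" "\<forall>i. s i = 1 \<or> s i = -1"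
    "\<forall>i j. A $ i $ j = (if j = p i then s i else 0)"
    using assms unfolding signed_perm_matrix_def by blast
  have "(A *v x) $ i = s i * x $ p i" for x i
  proof -
    have "(A *v x) $ i = (\<Sum>j\<in>UNIV. if j = p i then s i * x $ p i else 0)"
      unfolding matrix_vector_mult_def vec_lambda_beta by (rule sum.cong) (auto simp: ps(3))
    then show ?thesis
      by simp
  qed
  then show ?thesis
    using that ps(1,2) by blast
qed

lemma surj_signed_perm_matrix:
  assumes "signed_perm_matrix A"
  shows "surj ((*v) A)"
proof -
  obtain p s where p: "p permutes UNIV" and s: "\<And>i. s i = 1 \<or> s i = -1"
    and A: "\<And>x i. (A *v x) $ i = s i * x $ p i"
    using signed_perm_matrix_mult_vec[OF assms] by blast
  have "(A *v (\<chi> j. s (inv p j) * y $ inv p j)) $ i = y $ i" for y i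
    using s[of i] by (auto simp: A permutes_inverses(2)[OF p])
  then have "A *v (\<chi> j. s (inv p j) * y $ inv p j) = y" for y
    by (simp add: vec_eq_iff)
  then show ?thesis
    by (rule surjI)
qed

lemma lattice_point_signed_perm_iff:
  assumes "signed_perm_matrix A"
  shows "lattice_point (A *v x) \<longleftrightarrow> lattice_point x"
proof -
  obtain p s where p: "p permutes UNIV" and s: "\<And>i. s i = 1 \<or> s i = -1"
    and A: "\<And>x i. (A *v x) $ i = s i * x $ p i"
    using signed_perm_matrix_mult_vec[OF assms] by blast
  have "(A *v x) $ i \<in> \<int> \<longleftrightarrow> x $ p i \<in> \<int>" for i
    using s[of i] by (auto simp: A)
  then have "lattice_point (A *v x) \<longleftrightarrow> (\<forall>i. x $ p i \<in> \<int>)"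
    unfolding lattice_point_def by simp
  also have "\<dots> \<longleftrightarrow> lattice_point x"
    unfolding lattice_point_def by (auto, metis permutes_inverses(1)[OF p])
  finally show ?thesis .
qed

lemma vertex_offsets_signed_perm_iff:
  assumes "signed_perm_matrix A"
  shows "A *v w \<in> vertex_offsets \<longleftrightarrow> w \<in> vertex_offsets"
proof -
  obtain p s where p: "p permutes UNIV" and s: "\<And>i. s i = 1 \<or> s i = -1"
    and A: "\<And>x i. (A *v x) $ i = s i * x $ p i"
    using signed_perm_matrix_mult_vec[OF assms] by blast
  have "\<bar>(A *v w) $ i\<bar> = \<bar>w $ p i\<bar>" for i
    using s[of i] by (auto simp: A)
  then have "(\<lambda>i. \<bar>(A *v w) $ i\<bar>) = (\<lambda>j. \<bar>w $ j\<bar>) \<circ> p"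
    by auto
  then have "range (\<lambda>i. \<bar>(A *v w) $ i\<bar>) = range (\<lambda>j. \<bar>w $ j\<bar>)"
    by (simp only: image_comp[symmetric] permutes_surj[OF p])
  then show ?thesis
    unfolding vertex_offsets_def by simp
qed

lemma lattice_point_diff: "lattice_point x \<Longrightarrow> lattice_point y \<Longrightarrow> lattice_point (x - y)"
  unfolding lattice_point_def by simp

lemma open_M_automorphism_image:
  assumes "M_automorphism g" "open S"
  shows "open (g ` S)"
proof -
  obtain A t where A: "signed_perm_matrix A" and g: "g = (\<lambda>x. A *v x + t)"
    using assms(1) unfolding M_automorphism_def by blast
  have "open ((*v) A ` S)"
    using assms(2) matrix_vector_mul_linear surj_signed_perm_matrix[OF A]
    by (rule open_surjective_linear_image)
  then have "open ((\<lambda>y. t + y) ` (*v) A ` S)"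
    by (rule open_translation)
  then show ?thesis
    unfolding g image_image by (simp add: add.commute)
qed

lemma M_automorphism_image_vertex_offset:
  assumes "M_polyform P" "M_automorphism g"
    and "y \<in> g ` P" "lattice_point y" "w \<in> vertex_offsets"
  shows "y + w \<in> g ` P"
proof -
  obtain A t where A: "signed_perm_matrix A" and t: "lattice_point t"
    and g: "g = (\<lambda>x. A *v x + t)"
    using assms(2) unfolding M_automorphism_def by blast
  obtain x where x: "x \<in> P" "y = A *v x + t"
    using assms(3) g by blast
  have "lattice_point x"
    using lattice_point_diff[OF assms(4) t] x(2) lattice_point_signed_perm_iff[OF A] by simp
  obtain w' where w': "w = A *v w'"
    using surj_signed_perm_matrix[OF A] by blast
  have "x + w' \<in> P"
    using M_polyform_vertex_offset[OF assms(1) x(1) \<open>lattice_point x\<close>] assms(5)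
      vertex_offsets_signed_perm_iff[OF A] w' by blast
  moreover have "g (x + w') = y + w"
    unfolding g x(2) w' by (simp add: matrix_vector_right_distrib)
  ultimately show ?thesis
    by (metis image_eqI)
qed

lemma int_sum_squares_eq_1:
  fixes u v :: int
  assumes "u\<^sup>2 + v\<^sup>2 = 1"
  shows "(u, v) \<in> {(1, 0), (-1, 0), (0, 1), (0, -1)}"
proof -
  have "u\<^sup>2 \<le> 1" "v\<^sup>2 \<le> 1"
    using assms zero_le_power2[of u] zero_le_power2[of v] by linarith+
  then have "\<bar>u\<bar> \<le> 1" "\<bar>v\<bar> \<le> 1"
    by (simp_all add: abs_square_le_1)
  then have "u \<in> {-1, 0, 1}" "v \<in> {-1, 0, 1}"
    by auto
  then show ?thesis
    using assms by auto
qed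

lemma unit_distance_lattice_points_common_offset:
  assumes "lattice_point x" "lattice_point y" "dist x y = 1"
  obtains w w' where "w \<in> vertex_offsets" "w' \<in> vertex_offsets" "x + w = y + w'"
proof -
  obtain u v :: int where uv: "y$1 - x$1 = u" "y$2 - x$2 = v"
    using assms(1,2) unfolding lattice_point_def by (meson Ints_cases Ints_diff)
  have "sqrt ((y$1 - x$1)\<^sup>2 + (y$2 - x$2)\<^sup>2) = 1"
    using assms(3) unfolding dist_vec_def L2_set_def sum_2 dist_real_def
    by (simp add: power2_commute)
  then have "real_of_int (u\<^sup>2 + v\<^sup>2) = 1"
    unfolding uv by simp
  then have "(u, v) \<in> {(1, 0), (-1, 0), (0, 1), (0, -1)}"
    using int_sum_squares_eq_1 of_int_eq_1_iff by blast
  \<comment> \<open>the midpoint of [x, y] moved by 1/4 perpendicularly to it\<close>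
  then have "pt (u/2 - v/4) (v/2 + u/4) \<in> vertex_offsets"
    and "pt (- u/2 - v/4) (u/4 - v/2) \<in> vertex_offsets"
    unfolding mem_vertex_offsets_iff by (auto simp: pt_def)
  moreover have "x + pt (u/2 - v/4) (v/2 + u/4) = y + pt (- u/2 - v/4) (u/4 - v/2)"
    using uv by (auto simp: vec_eq_iff forall_2 pt_def)
  ultimately show ?thesis
    using that by blast
qed

lemma dist_ne_1_if_disjoint_M_tiles:
  assumes "M_polyform P" "M_automorphism g" "M_automorphism h" "g ` P \<inter> h ` P = {}"
    and x: "x \<in> lattice_pts (g ` P)" and y: "y \<in> lattice_pts (h ` P)"
  shows "dist x y \<noteq> 1"
proof
  assume "dist x y = 1"
  then obtain w w' where w: "w \<in> vertex_offsets" "w' \<in> vertex_offsets" and "x + w = y + w'"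
    using unit_distance_lattice_points_common_offset x y unfolding lattice_pts_def by blast
  moreover have "x + w \<in> g ` P"
    using M_automorphism_image_vertex_offset[OF assms(1,2) _ _ w(1)] x
    unfolding lattice_pts_def by blast
  moreover have "y + w' \<in> h ` P"
    using M_automorphism_image_vertex_offset[OF assms(1,3) _ _ w(2)] y
    unfolding lattice_pts_def by blast
  ultimately have "x + w \<in> g ` P \<inter> h ` P"
    by simp
  then show False
    using assms(4) by simp
qed

lemma open_subset_if_closure_subset_convex:
  fixes S T :: "'a::euclidean_space set"
  assumes "open S" "open T" "convex T" "closure S \<subseteq> closure T"
  shows "S \<subseteq> T"
proof -
  have "S \<subseteq> interior (closure S)"
    using assms(1) closure_subset interior_maximal by blast
  also have "\<dots> \<subseteq> interior (closure T)"
    using assms(4) by (rule interior_mono)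
  also have "\<dots> = T"
    using convex_interior_closure[OF assms(3)] interior_open[OF assms(2)] by simp
  finally show ?thesis .
qed

theorem corollary3:
  fixes PA PB :: "(real^2) set"
    and dirn :: "(real^2) set \<Rightarrow> (real^2) \<times> (real^2)"
    and col :: "(real^2) set \<Rightarrow> 'c"
    and k :: nat and g :: "nat \<Rightarrow> real^2 \<Rightarrow> real^2"
  assumes "convex_M_polyform PA" and "convex_M_polyform PB"
    and "DC_tiling PA dirn col PB k g"
  shows "lattice_pts PB - (lattice_pts PB - (\<Union>i<k. lattice_pts (g i ` PA)))
           = (\<Union>i<k. lattice_pts (g i ` PA)) \<and>
         (\<forall>i<k. \<forall>j<k. i \<noteq> j \<longrightarrow>
           (\<forall>x\<in>lattice_pts (g i ` PA). \<forall>y\<in>lattice_pts (g j ` PA). dist x y \<noteq> 1))"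
proof -
  have PA: "M_polyform PA" and PB: "M_polyform PB" "convex PB"
    using assms(1,2) unfolding convex_M_polyform_def by auto
  have aut: "\<And>i. i < k \<Longrightarrow> M_automorphism (g i)"
    and disjoint: "\<And>i j. \<lbrakk>i < k; j < k; i \<noteq> j\<rbrakk> \<Longrightarrow> g i ` PA \<inter> g j ` PA = {}"
    and cover: "(\<Union>i<k. closure (g i ` PA)) = closure PB"
    using assms(3) unfolding DC_tiling_def by auto
  have tile_subset: "g i ` PA \<subseteq> PB" if "i < k" for i
  proof (rule open_subset_if_closure_subset_convex)
    show "open (g i ` PA)"
      using open_M_automorphism_image[OF aut[OF that] open_M_polyform[OF PA]] .
    show "closure (g i ` PA) \<subseteq> closure PB"
      using cover that by blast
  qed (use PB open_M_polyform in auto)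
  have not_adjacent: "dist x y \<noteq> 1"
    if "i < k" "j < k" "i \<noteq> j"
      and "x \<in> lattice_pts (g i ` PA)" "y \<in> lattice_pts (g j ` PA)"
    for i j x y
    using dist_ne_1_if_disjoint_M_tiles[OF PA aut aut disjoint] that by blast
  have "(\<Union>i<k. lattice_pts (g i ` PA)) \<subseteq> lattice_pts PB"
    using tile_subset unfolding lattice_pts_def by blast
  then show ?thesis
    using not_adjacent by (simp add: Diff_Diff_Int Int_absorb1)
qed

end
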